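(* Let $1<\alpha<2$, let $M\ge8$ be even, and let $\epsilon$ satisfy $$\frac{2^\alpha\mu\theta_0}{(M-2)^\alpha}<\epsilon\le\mu\theta_0,$$ with $k_0=\big\lceil(\mu\theta_0/\epsilon)^{1/\alpha}\big\rceil+1$. Then $T-C=\widehat E+\widehat F$ for real symmetric matrices $\widehat E,\widehat F\in\mathbb R^{M\times M}$. These satisfy $\operatorname{rank}(\widehat E)=2k_0$, $$\|\widehat E\|_\infty<\mu\left[\frac{c_0}{2}-\frac{\theta}{(M-\frac12)^\alpha}\right],\qquad \|\widehat F\|_\infty<\epsilon .$$
   Context: Let $1<\alpha<2$, let $\gamma>0$ and $\tau>0$ be constants, and let $a<b$ be real numbers. Let $M$ be a positive integer, $h=(b-a)/(M+1)$ and $\mu=\gamma\tau/h^\alpha$. For $k\in\mathbb Z$ let $$c_k=(-1)^k\frac{\Gamma(\alpha+1)}{\Gamma(\alpha/2-k+1)\,\Gamma(\alpha/2+k+1)}.$$ Then $c_0>0$, $c_k=c_{-k}\le0$ for $k\ge1$, and $\sum_{k\ne0}|c_k|=c_0$. Let $T=\mu\,[c_{i-j}]_{i,j=1}^M$. For even $M$, let $C$ be the Strang circulant approximation of $T$: $C=\mu\,[s_{(i-j)\bmod M}]_{i,j=1}^M$, where - $s_k=c_k$ for $0\le k<M/2$, - $s_{M/2}=0$, - $s_k=c_{M-k}$ for $M/2<k<M$. Finally, define the constants $$\theta=\frac{\big(1-\frac{1+\alpha}{5+\alpha/2}\big)^{5+\alpha/2}e^{1+\alpha}\Gamma(\alpha+1)\sin(\pi\alpha/2)}{\pi\alpha},\qquad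 \theta_0=\frac{\sqrt2\,e^{13/12}\Gamma(\alpha+1)\sin(\pi\alpha/2)}{\pi\alpha}.$$ $\|\cdot\|_\infty$ is the maximum absolute row sum norm. *)

theory Defs
  imports "HOL-Analysis.Gamma_Function" "Jordan_Normal_Form.DL_Rank"
begin

text \<open>Coefficients c_k of the fractional centred difference (k an integer).\<close>
definition cfrac :: "real \<Rightarrow> int \<Rightarrow> real" where
  "cfrac \<alpha> k = (-1) powi k * Gamma (\<alpha> + 1) /
     (Gamma (\<alpha> / 2 - of_int k + 1) * Gamma (\<alpha> / 2 + of_int k + 1))"

definition hstep :: "real \<Rightarrow> real \<Rightarrow> nat \<Rightarrow> real" where
  "hstep a b M = (b - a) / (real M + 1)"

definition mu :: "real \<Rightarrow> real \<Rightarrow> real \<Rightarrow> real \<Rightarrow> real \<Rightarrow> nat \<Rightarrow> real" where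
  "mu \<alpha> \<gamma> \<tau> a b M = \<gamma> * \<tau> / (hstep a b M powr \<alpha>)"

text \<open>Toeplitz matrix T = mu [c_{i-j}] (0-based indices; only differences matter).\<close>
definition Tmat :: "real \<Rightarrow> real \<Rightarrow> real \<Rightarrow> real \<Rightarrow> real \<Rightarrow> nat \<Rightarrow> real mat" where
  "Tmat \<alpha> \<gamma> \<tau> a b M =
     mat M M (\<lambda>(i, j). mu \<alpha> \<gamma> \<tau> a b M * cfrac \<alpha> (int i - int j))"

text \<open>First column of the Strang circulant, for even M.\<close>
definition strang_s :: "real \<Rightarrow> nat \<Rightarrow> nat \<Rightarrow> real" where
  "strang_s \<alpha> M k =
     (if 2 * k < M then cfrac \<alpha> (int k)
      else if 2 * k = M then 0
      else cfrac \<alpha> (int M - int k))"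

definition Cmat :: "real \<Rightarrow> real \<Rightarrow> real \<Rightarrow> real \<Rightarrow> real \<Rightarrow> nat \<Rightarrow> real mat" where
  "Cmat \<alpha> \<gamma> \<tau> a b M =
     mat M M (\<lambda>(i, j). mu \<alpha> \<gamma> \<tau> a b M *
        strang_s \<alpha> M (nat ((int i - int j) mod int M)))"

definition theta :: "real \<Rightarrow> real" where
  "theta \<alpha> = (1 - (1 + \<alpha>) / (5 + \<alpha> / 2)) powr (5 + \<alpha> / 2) * exp (1 + \<alpha>)
      * Gamma (\<alpha> + 1) * sin (pi * \<alpha> / 2) / (pi * \<alpha>)"

definition theta0 :: "real \<Rightarrow> real" where
  "theta0 \<alpha> = sqrt 2 * exp (13 / 12) * Gamma (\<alpha> + 1) * sin (pi * \<alpha> / 2) / (pi * \<alpha>)"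

definition norm_inf :: "real mat \<Rightarrow> real" where
  "norm_inf A = (MAX i \<in> {..<dim_row A}. \<Sum>j<dim_col A. \<bar>A $$ (i, j)\<bar>)"

end

theory Submission
  imports Defs
begin

text \<open>
  Write \<open>t = |i - j|\<close>. Then \<open>T - C\<close> is the symmetric Toeplitz matrix of
  \<open>\<mu> (c\<^sub>t - s\<^sub>t)\<close>, which vanishes for \<open>2t < M\<close> and is bounded by
  \<open>\<mu> |c\<^bsub>M-t\<^esub>|\<close> for \<open>2t \<ge> M\<close>. The matrix \<open>E\<close> keeps the entries with
  \<open>t \<ge> M - k\<^sub>0\<close>: two triangular corner blocks with nonzero diagonal, hence rank \<open>2k\<^sub>0\<close>;
  \<open>F\<close> keeps the rest. By the reflection formula,
  \<open>-c\<^sub>k = g\<^sub>k - g\<^bsub>k+1\<^esub>\<close> for \<open>g\<^sub>k = \<kappa> \<Gamma>(k - \<alpha>/2) / \<Gamma>(k + \<alpha>/2)\<close>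
  (\<open>coef_tail\<close> below), so every absolute row sum telescopes: the rows of \<open>E\<close> are bounded by
  \<open>\<mu> (g\<^sub>1 - g\<^bsub>k\<^sub>0+1\<^esub>) = \<mu> (c\<^sub>0/2 - g\<^bsub>k\<^sub>0+1\<^esub>)\<close> and those of \<open>F\<close> by
  \<open>\<mu> g\<^bsub>k\<^sub>0+1\<^esub>\<close>. Log-convexity of \<open>\<Gamma>\<close> gives
  \<open>\<kappa> / (k + \<alpha>/2 - 1)\<^sup>\<alpha> \<le> g\<^sub>k \<le> \<kappa> / (k - \<alpha>/2)\<^sup>\<alpha>\<close>, and
  \<open>\<theta> \<le> \<kappa> \<le> \<theta>\<^sub>0\<close> turns these into the two stated bounds.
\<close>

section \<open>Bounds on the Gamma function\<close>

lemma Gamma_reflection_real: "Gamma x * Gamma (1 - x) = pi / sin (pi * x)"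
proof -
  have "complex_of_real (Gamma x * Gamma (1 - x)) =
        Gamma (complex_of_real x) * Gamma (1 - complex_of_real x)"
  proof -
    have "1 - complex_of_real x = complex_of_real (1 - x)" by simp
    thus ?thesis by (simp only: Gamma_complex_of_real of_real_mult)
  qed
  also have "\<dots> = complex_of_real (pi / sin (pi * x))"
    by (simp add: Gamma_reflection_complex flip: sin_of_real)
  finally show ?thesis by (simp only: of_real_eq_iff)
qed

lemma Gamma_plus1_pos: "(x::real) > 0 \<Longrightarrow> Gamma (x + 1) = x * Gamma x"
  by (rule Gamma_plus1) (auto dest: nonpos_Ints_nonpos)

lemma ln_Gamma_plus1_pos: "(x::real) > 0 \<Longrightarrow> ln (Gamma (x + 1)) = ln x + ln (Gamma x)"
  using ln_mult_pos[of x "Gamma x"] by (simp add: Gamma_plus1_pos)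

lemma ln_Gamma_convex:
  fixes u v t :: real assumes "u > 0" "v > 0" "0 \<le> t" "t \<le> 1"
  shows "ln (Gamma ((1 - t) * u + t * v)) \<le> (1 - t) * ln (Gamma u) + t * ln (Gamma v)"
  using convex_onD[OF log_convex_Gamma_real, of t u v] assms by (simp add: o_def)

lemma Gamma_add_le:
  fixes x s :: real assumes "x > 0" "0 \<le> s" "s \<le> 1"
  shows "Gamma (x + s) \<le> x powr s * Gamma x"
proof -
  have G: "Gamma x \<noteq> 0" using Gamma_real_pos[OF assms(1)] by linarith
  have "ln (Gamma (x + s)) \<le> (1 - s) * ln (Gamma x) + s * ln (Gamma (x + 1))"
    using ln_Gamma_convex[of x "x + 1" s] assms by (simp add: algebra_simps)
  also have "\<dots> = (1 - s) * ln (Gamma x) + s * (ln x + ln (Gamma x))"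
    using assms by (simp add: ln_Gamma_plus1_pos)
  also have "\<dots> = ln (x powr s * Gamma x)"
    using assms G by (simp add: ln_mult ln_powr algebra_simps)
  finally show ?thesis using assms by simp
qed

lemma Gamma_add_ge:
  fixes x s :: real assumes "x > 0" "0 \<le> s" "s \<le> 1"
  shows "x * Gamma x \<le> (x + s) powr (1 - s) * Gamma (x + s)"
proof -
  have xs: "x + s > 0" using assms by simp
  have G: "Gamma (x + s) \<noteq> 0" using Gamma_real_pos[OF xs] by linarith
  have "ln (x * Gamma x) = ln (Gamma (s * (x + s) + (1 - s) * (x + s + 1)))"
    using Gamma_plus1_pos[OF assms(1)] by (simp add: algebra_simps)
  also have "\<dots> \<le> s * ln (Gamma (x + s)) + (1 - s) * ln (Gamma (x + s + 1))"
    using ln_Gamma_convex[of "x + s" "x + s + 1" "1 - s"] assms by simp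
  also have "\<dots> = s * ln (Gamma (x + s)) + (1 - s) * (ln (x + s) + ln (Gamma (x + s)))"
    using xs by (simp add: ln_Gamma_plus1_pos)
  also have "\<dots> = ln ((x + s) powr (1 - s) * Gamma (x + s))"
    using xs G by (simp add: ln_mult ln_powr algebra_simps)
  finally show ?thesis using assms xs by simp
qed

lemma Gamma_shift_lower:
  fixes x a :: real assumes "x > 0" "1 \<le> a" "a \<le> 2"
  shows "x powr a * Gamma x \<le> Gamma (x + a)"
proof -
  define s where "s = a - 1"
  have s: "0 \<le> s" "s \<le> 1" and xs: "x + s > 0" using assms by (auto simp: s_def)
  have "x powr a * Gamma x = x powr s * (x * Gamma x)"
    using assms by (simp add: s_def powr_diff)
  also have "\<dots> \<le> (x + s) powr s * ((x + s) powr (1 - s) * Gamma (x + s))"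
    by (rule mult_mono) (use assms s Gamma_add_ge[OF assms(1) s] in \<open>auto intro: powr_mono2\<close>)
  also have "\<dots> = (x + s) * Gamma (x + s)"
    using xs by (simp add: powr_add[symmetric])
  also have "\<dots> = Gamma (x + a)"
    using Gamma_plus1_pos[OF xs] by (simp add: s_def)
  finally show ?thesis .
qed

lemma Gamma_shift_upper:
  fixes x a :: real assumes "x > 0" "1 \<le> a" "a \<le> 2"
  shows "Gamma (x + a) \<le> (x + a - 1) powr a * Gamma x"
proof -
  define s where "s = a - 1"
  have s: "0 \<le> s" "s \<le> 1" and xs: "x + s > 0" using assms by (auto simp: s_def)
  have "Gamma (x + a) = (x + s) * Gamma (x + s)"
    using Gamma_plus1_pos[OF xs] by (simp add: s_def)
  also have "\<dots> \<le> (x + s) * (x powr s * Gamma x)"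
    using Gamma_add_le[OF assms(1) s] xs by (intro mult_left_mono) auto
  also have "\<dots> \<le> (x + s) * ((x + s) powr s * Gamma x)"
    using assms s xs by (intro mult_left_mono mult_right_mono powr_mono2) auto
  also have "\<dots> = (x + s) powr (s + 1) * Gamma x"
    using xs by (simp add: powr_add)
  also have "\<dots> = (x + a - 1) powr a * Gamma x"
    by (simp add: s_def add_diff_eq)
  finally show ?thesis .
qed

section \<open>The coefficients \<open>c\<^sub>k\<close>\<close>

definition kappa :: "real \<Rightarrow> real" where
  "kappa \<alpha> = Gamma (\<alpha> + 1) * sin (pi * \<alpha> / 2) / (pi * \<alpha>)"

definition coef_tail :: "real \<Rightarrow> nat \<Rightarrow> real" where
  "coef_tail \<alpha> k = kappa \<alpha> * Gamma (real k - \<alpha> / 2) / Gamma (real k + \<alpha> / 2)"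

lemma half_not_in_Ints:
  fixes \<alpha> :: real assumes "0 < \<alpha>" "\<alpha> < 2"
  shows "\<alpha> / 2 \<notin> \<int>"
proof
  assume "\<alpha> / 2 \<in> \<int>"
  then obtain z :: int where z: "\<alpha> / 2 = of_int z" by (auto elim: Ints_cases)
  have "0 < real_of_int z" "real_of_int z < 1" using z assms by linarith+
  hence "0 < z" "z < 1" by simp_all
  thus False by simp
qed

lemma kappa_pos: "0 < \<alpha> \<Longrightarrow> \<alpha> < 2 \<Longrightarrow> 0 < kappa \<alpha>"
  unfolding kappa_def by (intro divide_pos_pos mult_pos_pos sin_gt_zero) auto

lemma cfrac_nat_Gamma_ratio:
  fixes \<alpha> :: real assumes "0 < \<alpha>" "\<alpha> < 2"
  shows "cfrac \<alpha> (int k) = - \<alpha> * kappa \<alpha> * Gamma (real k - \<alpha> / 2) / Gamma (real k + 1 + \<alpha> / 2)"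
proof -
  define x where "x = real k - \<alpha> / 2"
  have "x \<notin> \<int>"
  proof
    assume "x \<in> \<int>"
    hence "real k - x \<in> \<int>" by (intro Ints_diff) auto
    thus False using half_not_in_Ints[OF assms] by (simp add: x_def)
  qed
  hence Gx: "Gamma x \<noteq> 0" by (auto simp: Gamma_eq_zero_iff dest: nonpos_Ints_subset_Ints[THEN subsetD])
  have sin_x: "sin (pi * x) = (-1) ^ Suc k * sin (pi * \<alpha> / 2)"
    by (simp add: x_def right_diff_distrib sin_diff)
  have "Gamma (1 - x) = Gamma x * Gamma (1 - x) / Gamma x"
    using Gx by simp
  also have "\<dots> = pi / ((-1) ^ Suc k * sin (pi * \<alpha> / 2) * Gamma x)"
    unfolding Gamma_reflection_real sin_x by simp
  finally have refl: "Gamma (\<alpha> / 2 - real k + 1) = pi / ((-1) ^ Suc k * sin (pi * \<alpha> / 2) * Gamma x)"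
    by (simp add: x_def algebra_simps)
  have "cfrac \<alpha> (int k) = (-1) ^ k * Gamma (\<alpha> + 1) /
      (Gamma (\<alpha> / 2 - real k + 1) * Gamma (real k + 1 + \<alpha> / 2))"
    by (simp add: cfrac_def algebra_simps)
  also have "\<dots> = (-1) ^ k * (-1) ^ Suc k * Gamma (\<alpha> + 1) * sin (pi * \<alpha> / 2) * Gamma x
      / (pi * Gamma (real k + 1 + \<alpha> / 2))"
    unfolding refl by simp
  also have "\<dots> = - \<alpha> * kappa \<alpha> * Gamma x / Gamma (real k + 1 + \<alpha> / 2)"
    using assms by (simp add: kappa_def flip: power_mult_distrib)
  finally show ?thesis by (simp add: x_def)
qed

lemma cfrac_uminus: "cfrac \<alpha> (- k) = cfrac \<alpha> k"
proof -
  have "(-1::real) powi (- k) = (-1) powi k"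
    by (simp add: power_int_minus power_int_inverse[symmetric])
  thus ?thesis by (simp add: cfrac_def algebra_simps)
qed

lemma cfrac_nat_neg:
  fixes \<alpha> :: real assumes "0 < \<alpha>" "\<alpha> < 2" "1 \<le> k"
  shows "cfrac \<alpha> (int k) < 0"
  unfolding cfrac_nat_Gamma_ratio[OF assms(1,2)] using kappa_pos[OF assms(1,2)] assms
  by (simp add: mult_pos_pos divide_pos_pos)

lemma coef_tail_pos:
  fixes \<alpha> :: real assumes "0 < \<alpha>" "\<alpha> < 2" "1 \<le> k"
  shows "0 < coef_tail \<alpha> k"
  unfolding coef_tail_def using kappa_pos[OF assms(1,2)] assms
  by (simp add: mult_pos_pos divide_pos_pos)

lemma cfrac_eq_coef_tail_diff:
  fixes \<alpha> :: real assumes "0 < \<alpha>" "\<alpha> < 2" "1 \<le> k"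
  shows "cfrac \<alpha> (int k) = coef_tail \<alpha> (Suc k) - coef_tail \<alpha> k"
proof -
  define x y where "x = real k - \<alpha> / 2" and "y = real k + \<alpha> / 2"
  have x: "x > 0" and y: "y > 0" using assms by (auto simp: x_def y_def)
  have Gy: "Gamma y \<noteq> 0" using Gamma_real_pos[OF y] by linarith
  have ex: "Gamma (real (Suc k) - \<alpha> / 2) = x * Gamma x"
    using Gamma_plus1_pos[OF x] by (simp add: x_def algebra_simps)
  have ey: "Gamma (real (Suc k) + \<alpha> / 2) = y * Gamma y"
    and ey': "Gamma (real k + 1 + \<alpha> / 2) = y * Gamma y"
    using Gamma_plus1_pos[OF y] by (simp_all add: y_def algebra_simps)
  have "coef_tail \<alpha> (Suc k) - coef_tail \<alpha> k
      = kappa \<alpha> * (x * Gamma x) / (y * Gamma y) - kappa \<alpha> * Gamma x / Gamma y"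
    unfolding coef_tail_def ex ey x_def y_def ..
  also have "\<dots> = - (y - x) * kappa \<alpha> * Gamma x / (y * Gamma y)"
    using y Gy by (simp add: field_simps)
  also have "\<dots> = cfrac \<alpha> (int k)"
    unfolding cfrac_nat_Gamma_ratio[OF assms(1,2)] ey' by (simp add: x_def y_def)
  finally show ?thesis ..
qed

lemma sum_cfrac_nat:
  fixes \<alpha> :: real assumes "0 < \<alpha>" "\<alpha> < 2" "1 \<le> l" "l \<le> n"
  shows "(\<Sum>m = l..<n. cfrac \<alpha> (int m)) = coef_tail \<alpha> n - coef_tail \<alpha> l"
proof -
  have "(\<Sum>m = l..<n. cfrac \<alpha> (int m)) = (\<Sum>m = l..<n. coef_tail \<alpha> (Suc m) - coef_tail \<alpha> m)"
    using assms by (intro sum.cong refl) (simp add: cfrac_eq_coef_tail_diff)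
  also have "\<dots> = coef_tail \<alpha> n - coef_tail \<alpha> l"
    by (rule sum_Suc_diff'[OF assms(4)])
  finally show ?thesis .
qed

lemma cfrac_nat_Suc_gt:
  fixes \<alpha> :: real assumes "0 < \<alpha>" "\<alpha> < 2" "1 \<le> k"
  shows "cfrac \<alpha> (int k) < cfrac \<alpha> (int (Suc k))"
proof -
  define x y where "x = real k - \<alpha> / 2" and "y = real k + 1 + \<alpha> / 2"
  have x: "x > 0" and y: "y > 0" using assms by (auto simp: x_def y_def)
  have ex: "Gamma (real (Suc k) - \<alpha> / 2) = x * Gamma x"
    using Gamma_plus1_pos[OF x] by (simp add: x_def algebra_simps)
  have ey: "Gamma (real (Suc k) + 1 + \<alpha> / 2) = y * Gamma y"
    using Gamma_plus1_pos[OF y] by (simp add: y_def algebra_simps)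
  have Gy: "Gamma y \<noteq> 0" using Gamma_real_pos[OF y] by linarith
  have step: "cfrac \<alpha> (int (Suc k)) = cfrac \<alpha> (int k) * (x / y)"
    unfolding cfrac_nat_Gamma_ratio[OF assms(1,2)] ex ey using y Gy by (simp add: x_def y_def mult_ac)
  have "x / y < 1" using x y assms by (simp add: x_def y_def)
  from mult_strict_left_mono_neg[OF this cfrac_nat_neg[OF assms]]
  show ?thesis unfolding step by simp
qed

lemma cfrac_nat_strict_mono:
  fixes \<alpha> :: real assumes "0 < \<alpha>" "\<alpha> < 2" "1 \<le> i" "i < j"
  shows "cfrac \<alpha> (int i) < cfrac \<alpha> (int j)"
proof -
  define f where "f n = cfrac \<alpha> (int (Suc n))" for n
  have "f n < f (Suc n)" for n
    unfolding f_def by (rule cfrac_nat_Suc_gt[OF assms(1,2)]) simp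
  from lift_Suc_mono_less[of f, OF this] have "f (i - 1) < f (j - 1)"
    using assms(3,4) by simp
  thus ?thesis using assms(3,4) by (simp add: f_def)
qed

lemma cfrac_zero_half:
  fixes \<alpha> :: real assumes "0 < \<alpha>" "\<alpha> < 2"
  shows "cfrac \<alpha> 0 / 2 = coef_tail \<alpha> 1"
proof -
  define h where "h = \<alpha> / 2"
  have h: "h > 0" by (simp add: h_def assms)
  have G: "Gamma h \<noteq> 0" using Gamma_real_pos[OF h] by linarith
  have S: "sin (pi * h) > 0" using assms by (auto simp: h_def intro!: sin_gt_zero)
  have refl: "Gamma (1 - h) = pi / (sin (pi * h) * Gamma h)"
    using Gamma_reflection_real[of h] G S by (simp add: field_simps)
  have double: "\<alpha> * Gamma h = 2 * Gamma (h + 1)"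
    unfolding Gamma_plus1_pos[OF h] by (simp add: h_def)
  have "coef_tail \<alpha> 1 = Gamma (\<alpha> + 1) * sin (pi * h) / (pi * \<alpha>) * Gamma (1 - h) / Gamma (h + 1)"
    by (simp add: coef_tail_def kappa_def h_def add.commute)
  also have "\<dots> = Gamma (\<alpha> + 1) / (\<alpha> * Gamma h * Gamma (h + 1))"
    unfolding refl using S G by (simp add: field_simps)
  also have "\<dots> = cfrac \<alpha> 0 / 2"
    unfolding mult.assoc double by (simp add: cfrac_def h_def add.commute)
  finally show ?thesis ..
qed

lemma coef_tail_le:
  fixes \<alpha> :: real assumes "1 \<le> \<alpha>" "\<alpha> < 2" "1 \<le> k"
  shows "coef_tail \<alpha> k \<le> kappa \<alpha> / (real k - \<alpha> / 2) powr \<alpha>"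
proof -
  define x where "x = real k - \<alpha> / 2"
  have x: "x > 0" using assms by (simp add: x_def)
  have "x powr \<alpha> * Gamma x \<le> Gamma (real k + \<alpha> / 2)"
    using Gamma_shift_lower[OF x assms(1)] assms by (simp add: x_def add.commute)
  hence "kappa \<alpha> * Gamma x / Gamma (real k + \<alpha> / 2) \<le> kappa \<alpha> * Gamma x / (x powr \<alpha> * Gamma x)"
    using kappa_pos[of \<alpha>] assms x by (intro divide_left_mono) auto
  also have "\<dots> = kappa \<alpha> / x powr \<alpha>"
    using Gamma_real_pos[OF x] by simp
  finally show ?thesis unfolding coef_tail_def x_def .
qed

lemma coef_tail_ge:
  fixes \<alpha> :: real assumes "1 \<le> \<alpha>" "\<alpha> < 2" "1 \<le> k"
  shows "kappa \<alpha> / (real k + \<alpha> / 2 - 1) powr \<alpha> \<le> coef_tail \<alpha> k"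
proof -
  define x y where "x = real k - \<alpha> / 2" and "y = real k + \<alpha> / 2 - 1"
  have x: "x > 0" and y: "y > 0" using assms by (simp_all add: x_def y_def)
  have "kappa \<alpha> / y powr \<alpha> = kappa \<alpha> * Gamma x / (y powr \<alpha> * Gamma x)"
    using Gamma_real_pos[OF x] by simp
  also have "\<dots> \<le> kappa \<alpha> * Gamma x / Gamma (real k + \<alpha> / 2)"
    using Gamma_shift_upper[OF x assms(1)] kappa_pos[of \<alpha>] assms x y
    by (intro divide_left_mono) (auto simp: x_def y_def add.commute)
  finally show ?thesis unfolding coef_tail_def x_def y_def .
qed

lemma coef_tail_Suc_le:
  fixes \<alpha> :: real assumes "1 \<le> \<alpha>" "\<alpha> < 2" "1 \<le> k"
  shows "coef_tail \<alpha> (Suc k) \<le> kappa \<alpha> / real k powr \<alpha>"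
proof -
  have "coef_tail \<alpha> (Suc k) \<le> kappa \<alpha> / (real (Suc k) - \<alpha> / 2) powr \<alpha>"
    using assms by (intro coef_tail_le) auto
  also have "\<dots> \<le> kappa \<alpha> / real k powr \<alpha>"
    using assms kappa_pos[of \<alpha>] by (intro divide_left_mono powr_mono2 mult_pos_pos) auto
  finally show ?thesis .
qed

lemma coef_tail_Suc_gt:
  fixes \<alpha> r :: real assumes "1 \<le> \<alpha>" "\<alpha> < 2" "1 \<le> k" "real k + \<alpha> / 2 < r"
  shows "kappa \<alpha> / r powr \<alpha> < coef_tail \<alpha> (Suc k)"
proof -
  have "kappa \<alpha> / r powr \<alpha> < kappa \<alpha> / (real k + \<alpha> / 2) powr \<alpha>"
    using assms kappa_pos[of \<alpha>] by (intro divide_strict_left_mono powr_less_mono2 mult_pos_pos) auto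
  also have "\<dots> \<le> coef_tail \<alpha> (Suc k)"
    using coef_tail_ge[OF assms(1,2), of "Suc k"] by simp
  finally show ?thesis .
qed

lemma theta_le_kappa:
  fixes \<alpha> :: real assumes "0 < \<alpha>" "\<alpha> < 2"
  shows "theta \<alpha> \<le> kappa \<alpha>"
proof -
  define t N where "t = (1 + \<alpha>) / (5 + \<alpha> / 2)" and "N = 5 + \<alpha> / 2"
  have N: "N > 0" and tN: "t * N = 1 + \<alpha>" and t1: "t < 1"
    using assms by (auto simp: t_def N_def field_simps)
  have "N * ln (1 - t) \<le> N * (- t)"
    using N t1 ln_le_minus_one[of "1 - t"] by (intro mult_left_mono) auto
  hence "(1 - t) powr N \<le> exp (- (1 + \<alpha>))"
    using t1 tN by (simp add: powr_def algebra_simps)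
  hence "(1 - t) powr N * exp (1 + \<alpha>) \<le> exp (- (1 + \<alpha>)) * exp (1 + \<alpha>)"
    by (intro mult_right_mono) auto
  hence "(1 - t) powr N * exp (1 + \<alpha>) \<le> 1"
    by (simp flip: exp_add)
  hence "(1 - t) powr N * exp (1 + \<alpha>) * kappa \<alpha> \<le> kappa \<alpha>"
    using kappa_pos[OF assms] by (simp add: mult_le_cancel_right1)
  thus ?thesis by (simp add: theta_def kappa_def t_def N_def)
qed

lemma kappa_le_theta0:
  fixes \<alpha> :: real assumes "0 < \<alpha>" "\<alpha> < 2"
  shows "kappa \<alpha> \<le> theta0 \<alpha>"
proof -
  have "1 \<le> sqrt 2 * exp (13 / 12 :: real)"
    using mult_mono[of 1 "sqrt 2" 1 "exp (13 / 12 :: real)"] by simp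
  hence "1 * kappa \<alpha> \<le> sqrt 2 * exp (13 / 12) * kappa \<alpha>"
    using kappa_pos[OF assms] by (intro mult_right_mono) auto
  thus ?thesis by (simp add: theta0_def kappa_def)
qed

section \<open>\<open>T - C\<close> as a symmetric Toeplitz matrix\<close>

definition absdiff :: "nat \<Rightarrow> nat \<Rightarrow> nat" where
  "absdiff i j = (if j \<le> i then i - j else j - i)"

lemma absdiff_commute: "absdiff i j = absdiff j i"
  by (simp add: absdiff_def)

lemma absdiff_less: "i < n \<Longrightarrow> j < n \<Longrightarrow> absdiff i j < n"
  by (auto simp: absdiff_def)

lemma inj_on_absdiff_far: "inj_on (absdiff i) {j. j < n \<and> n \<le> 2 * absdiff i j}"
proof (rule inj_onI)
  fix j1 j2 assume "j1 \<in> {j. j < n \<and> n \<le> 2 * absdiff i j}" "j2 \<in> {j. j < n \<and> n \<le> 2 * absdiff i j}"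
    and "absdiff i j1 = absdiff i j2"
  thus "j1 = j2" unfolding absdiff_def by (simp split: if_split_asm)
qed

definition sym_toeplitz :: "nat \<Rightarrow> (nat \<Rightarrow> 'a) \<Rightarrow> 'a mat" where
  "sym_toeplitz n f = mat n n (\<lambda>(i, j). f (absdiff i j))"

lemma sym_toeplitz_carrier [simp]: "sym_toeplitz n f \<in> carrier_mat n n"
  by (simp add: sym_toeplitz_def)

lemma dim_sym_toeplitz [simp]:
  "dim_row (sym_toeplitz n f) = n" "dim_col (sym_toeplitz n f) = n"
  by (simp_all add: sym_toeplitz_def)

lemma index_sym_toeplitz [simp]:
  "i < n \<Longrightarrow> j < n \<Longrightarrow> sym_toeplitz n f $$ (i, j) = f (absdiff i j)"
  by (simp add: sym_toeplitz_def)

lemma transpose_sym_toeplitz: "transpose_mat (sym_toeplitz n f) = sym_toeplitz n f"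
  by (rule eq_matI) (auto simp: absdiff_commute)

lemma sym_toeplitz_add:
  "sym_toeplitz n f + sym_toeplitz n g = sym_toeplitz n (\<lambda>t. f t + g t)"
  by (rule eq_matI) auto

definition circ_defect :: "real \<Rightarrow> nat \<Rightarrow> nat \<Rightarrow> real" where
  "circ_defect \<alpha> M t = cfrac \<alpha> (int t) - strang_s \<alpha> M t"

lemma circ_defect_eq_0: "2 * t < M \<Longrightarrow> circ_defect \<alpha> M t = 0"
  by (simp add: circ_defect_def strang_s_def)

lemma abs_circ_defect_le:
  fixes \<alpha> :: real assumes "0 < \<alpha>" "\<alpha> < 2" "M \<le> 2 * t" "t < M"
  shows "\<bar>circ_defect \<alpha> M t\<bar> \<le> - cfrac \<alpha> (int (M - t))"
proof (cases "2 * t = M")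
  case True
  hence "M - t = t" by simp
  thus ?thesis using True cfrac_nat_neg[OF assms(1,2), of t] assms by (simp add: circ_defect_def strang_s_def)
next
  case False
  hence "M - t < t" using assms by simp
  hence "cfrac \<alpha> (int (M - t)) < cfrac \<alpha> (int t)"
    using assms by (intro cfrac_nat_strict_mono) auto
  moreover have "cfrac \<alpha> (int t) < 0"
    using assms by (intro cfrac_nat_neg) auto
  moreover have "strang_s \<alpha> M t = cfrac \<alpha> (int (M - t))"
    using False assms by (simp add: strang_s_def of_nat_diff)
  ultimately show ?thesis unfolding circ_defect_def by linarith
qed

lemma circ_defect_ne_0:
  fixes \<alpha> :: real assumes "0 < \<alpha>" "\<alpha> < 2" "1 \<le> k" "2 * k \<le> M"
  shows "circ_defect \<alpha> M (M - k) \<noteq> 0"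
proof (cases "2 * k = M")
  case True
  hence "M - k = k" by simp
  thus ?thesis using True cfrac_nat_neg[OF assms(1,2,3)]
    by (simp add: circ_defect_def strang_s_def)
next
  case False
  hence "k < M - k" using assms by simp
  hence "cfrac \<alpha> (int k) < cfrac \<alpha> (int (M - k))"
    by (rule cfrac_nat_strict_mono[OF assms(1,2,3)])
  moreover have "\<not> 2 * (M - k) \<le> M" "int M - int (M - k) = int k"
    using False assms by auto
  ultimately show ?thesis by (simp add: circ_defect_def strang_s_def)
qed

lemma strang_s_reflect: "0 < t \<Longrightarrow> t < M \<Longrightarrow> strang_s \<alpha> M (M - t) = strang_s \<alpha> M t"
  by (auto simp: strang_s_def of_nat_diff)

lemma cfrac_int_diff: "cfrac \<alpha> (int i - int j) = cfrac \<alpha> (int (absdiff i j))"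
proof (cases "j \<le> i")
  case True
  thus ?thesis by (simp add: absdiff_def of_nat_diff)
next
  case False
  hence "int i - int j = - int (absdiff i j)" by (simp add: absdiff_def of_nat_diff)
  thus ?thesis by (simp only: cfrac_uminus)
qed

lemma strang_s_int_diff_mod:
  assumes "i < M" "j < M"
  shows "strang_s \<alpha> M (nat ((int i - int j) mod int M)) = strang_s \<alpha> M (absdiff i j)"
proof (cases "j \<le> i")
  case True
  have "(int i - int j) mod int M = int i - int j"
    using True assms by (intro mod_pos_pos_trivial) auto
  hence "nat ((int i - int j) mod int M) = absdiff i j"
    using True by (simp add: absdiff_def)
  thus ?thesis by simp
next
  case False
  have "(int i - int j) mod int M = (int i - int j + int M) mod int M"
    by (simp only: mod_add_self2)
  also have "\<dots> = int i - int j + int M"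
    using False assms by (intro mod_pos_pos_trivial) auto
  finally have "nat ((int i - int j) mod int M) = M - absdiff i j"
    using False by (simp add: absdiff_def)
  moreover have "strang_s \<alpha> M (M - absdiff i j) = strang_s \<alpha> M (absdiff i j)"
    using False assms by (intro strang_s_reflect) (auto simp: absdiff_def)
  ultimately show ?thesis by simp
qed

lemma Tmat_minus_Cmat:
  "Tmat \<alpha> \<gamma> \<tau> a b M - Cmat \<alpha> \<gamma> \<tau> a b M
     = sym_toeplitz M (\<lambda>t. mu \<alpha> \<gamma> \<tau> a b M * circ_defect \<alpha> M t)" (is "?D = ?S")
proof (rule eq_matI)
  fix i j assume "i < dim_row ?S" "j < dim_col ?S"
  hence ij: "i < M" "j < M" by simp_all
  have "?D $$ (i, j) = mu \<alpha> \<gamma> \<tau> a b M * cfrac \<alpha> (int i - int j)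
        - mu \<alpha> \<gamma> \<tau> a b M * strang_s \<alpha> M (nat ((int i - int j) mod int M))"
    using ij by (simp add: Tmat_def Cmat_def)
  also have "\<dots> = mu \<alpha> \<gamma> \<tau> a b M * circ_defect \<alpha> M (absdiff i j)"
    unfolding cfrac_int_diff strang_s_int_diff_mod[OF ij] circ_defect_def
    by (simp add: right_diff_distrib)
  finally show "?D $$ (i, j) = ?S $$ (i, j)" using ij by simp
qed (simp_all add: Tmat_def Cmat_def)

definition corner_part :: "nat \<Rightarrow> nat \<Rightarrow> (nat \<Rightarrow> 'a::zero) \<Rightarrow> 'a mat" where
  "corner_part M k f = sym_toeplitz M (\<lambda>t. if M - k \<le> t then f t else 0)"

definition band_part :: "nat \<Rightarrow> nat \<Rightarrow> (nat \<Rightarrow> 'a::zero) \<Rightarrow> 'a mat" where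
  "band_part M k f = sym_toeplitz M (\<lambda>t. if M - k \<le> t then 0 else f t)"

lemma corner_part_plus_band_part:
  "corner_part M k f + band_part M k f = sym_toeplitz M (f :: nat \<Rightarrow> 'a::monoid_add)"
  unfolding corner_part_def band_part_def sym_toeplitz_add by (rule arg_cong[where f = "sym_toeplitz M"]) auto

section \<open>Rank of the corner part\<close>

definition triangular_pattern :: "'a::zero mat \<Rightarrow> (nat \<Rightarrow> nat) \<Rightarrow> (nat \<Rightarrow> nat) \<Rightarrow> bool" where
  "triangular_pattern A piv key \<longleftrightarrow>
     (\<forall>b < dim_col A. piv b < dim_row A \<and> A $$ (piv b, b) \<noteq> 0 \<and>
        (\<forall>b' < dim_col A. b' \<noteq> b \<and> A $$ (piv b, b') \<noteq> 0 \<longrightarrow> key b' < key b))"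

lemma triangular_pattern_kernel:
  fixes A :: "'a::field mat"
  assumes tri: "triangular_pattern A piv key"
    and v: "v \<in> carrier_vec (dim_col A)" and Av: "A *\<^sub>v v = 0\<^sub>v (dim_row A)"
  shows "v = 0\<^sub>v (dim_col A)"
proof -
  have "v $ b = 0" if "b < dim_col A" for b
    using that
  proof (induction "key b" arbitrary: b rule: less_induct)
    case less
    let ?p = "piv b"
    have p: "?p < dim_row A" "A $$ (?p, b) \<noteq> 0" using tri less.prems by (auto simp: triangular_pattern_def)
    have "0 = (A *\<^sub>v v) $ ?p" using Av p by simp
    also have "\<dots> = (\<Sum>j\<in>{0..<dim_col A}. A $$ (?p, j) * v $ j)"
      using v p by (simp add: scalar_prod_def)
    also have "\<dots> = A $$ (?p, b) * v $ b + (\<Sum>j\<in>{0..<dim_col A} - {b}. A $$ (?p, j) * v $ j)"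
      using less.prems by (subst sum.remove[of _ b]) auto
    also have "(\<Sum>j\<in>{0..<dim_col A} - {b}. A $$ (?p, j) * v $ j) = 0"
    proof (rule sum.neutral, intro ballI)
      fix j assume j: "j \<in> {0..<dim_col A} - {b}"
      show "A $$ (?p, j) * v $ j = 0"
      proof (cases "A $$ (?p, j) = 0")
        case False
        hence "key j < key b" using tri less.prems j by (auto simp: triangular_pattern_def)
        thus ?thesis using less.hyps j by auto
      qed simp
    qed
    finally show "v $ b = 0" using p by simp
  qed
  thus ?thesis using v by (intro eq_vecI) auto
qed

lemma triangular_pattern_distinct_cols:
  assumes tri: "triangular_pattern A piv key"
  shows "distinct (cols A)"
proof (subst distinct_conv_nth, intro allI impI)
  fix b1 b2 assume "b1 < length (cols A)" "b2 < length (cols A)" "b1 \<noteq> b2"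
  hence b: "b1 < dim_col A" "b2 < dim_col A" "b1 \<noteq> b2" by auto
  have key_less: "key b' < key b"
    if "b < dim_col A" "b' < dim_col A" "b' \<noteq> b" "col A b = col A b'" for b b'
  proof -
    have p: "piv b < dim_row A" "A $$ (piv b, b) \<noteq> 0"
      using tri that(1) by (auto simp: triangular_pattern_def)
    have "A $$ (piv b, b') = col A b' $ piv b" using p that by simp
    also have "\<dots> = A $$ (piv b, b)" using p that by (simp flip: that(4))
    finally show ?thesis using tri that p by (auto simp: triangular_pattern_def)
  qed
  show "cols A ! b1 \<noteq> cols A ! b2"
    using key_less[of b1 b2] key_less[of b2 b1] b by fastforce
qed

lemma (in vec_space) lin_indpt_cols_triangular_pattern:
  assumes "A \<in> carrier_mat n m" "triangular_pattern A piv key"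
  shows "lin_indpt (set (cols A))"
proof
  assume "lin_dep (set (cols A))"
  then obtain v where "v \<in> carrier_vec m" "v \<noteq> 0\<^sub>v m" "A *\<^sub>v v = 0\<^sub>v n"
    using lin_depE[OF assms(1) _ triangular_pattern_distinct_cols[OF assms(2)]] by blast
  thus False using triangular_pattern_kernel[OF assms(2), of v] assms(1) by auto
qed

lemma (in vec_space) rank_eq_if_cols_between:
  assumes A: "A \<in> carrier_mat n m" and B: "B \<in> carrier_mat n r"
    and dist: "distinct (cols B)" and indpt: "lin_indpt (set (cols B))"
    and sub: "set (cols B) \<subseteq> set (cols A)"
    and sup: "set (cols A) \<subseteq> insert (0\<^sub>v n) (set (cols B))"
  shows "rank A = r"
proof (rule antisym)
  have card: "card (set (cols B)) = r" using distinct_card[OF dist] B by simp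
  obtain S where S: "maximal S (\<lambda>T. T \<subseteq> set (cols A) \<and> lin_indpt T)"
    using maximal_exists_superset[of "set (cols A)" "\<lambda>T. T \<subseteq> set (cols A) \<and> lin_indpt T"
      "set (cols B)"] sub indpt by blast
  have SA: "S \<subseteq> set (cols A)" and Sli: "lin_indpt S" using S by (auto simp: maximal_def)
  have "S \<subseteq> carrier_vec n" using SA A cols_dim by blast
  hence "0\<^sub>v n \<notin> S" using zero_nin_lin_indpt[OF _ Sli] class_semiring.one_zeroI by auto
  hence "S \<subseteq> set (cols B)" using SA sup by blast
  hence "card S \<le> r" using card card_mono[of "set (cols B)" S] by simp
  thus "rank A \<le> r" using rank_card_indpt[OF A S] by simp
  show "r \<le> rank A" using rank_ge_card_indpt[OF A sub indpt] card by simp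
qed

lemma (in vec_space) rank_eq_if_other_cols_zero:
  assumes A: "A \<in> carrier_mat n m" and c: "\<And>b. b < r \<Longrightarrow> c b < m"
    and tri: "triangular_pattern (mat n r (\<lambda>(i, b). A $$ (i, c b))) piv key"
    and zero: "\<And>j. j < m \<Longrightarrow> j \<notin> c ` {..<r} \<Longrightarrow> col A j = 0\<^sub>v n"
  shows "rank A = r"
proof -
  define B where "B = mat n r (\<lambda>(i, b). A $$ (i, c b))"
  have B: "B \<in> carrier_mat n r" by (simp add: B_def)
  have col_B: "col B b = col A (c b)" if "b < r" for b
    using that c[OF that] A by (auto intro!: eq_vecI simp: B_def)
  have sub: "set (cols B) \<subseteq> set (cols A)"
  proof
    fix x assume "x \<in> set (cols B)"
    then obtain b where b: "b < r" "x = col B b" using B by (auto simp: in_set_conv_nth)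
    hence "x = cols A ! c b" using col_B c A by simp
    thus "x \<in> set (cols A)" using c[OF b(1)] A by (metis carrier_matD(2) cols_length nth_mem)
  qed
  have sup: "set (cols A) \<subseteq> insert (0\<^sub>v n) (set (cols B))"
  proof
    fix x assume "x \<in> set (cols A)"
    then obtain j where j: "j < m" "x = col A j" using A by (auto simp: in_set_conv_nth)
    show "x \<in> insert (0\<^sub>v n) (set (cols B))"
    proof (cases "j \<in> c ` {..<r}")
      case True
      then obtain b where "b < r" "x = cols B ! b" using j col_B B by auto
      thus ?thesis using B by (metis carrier_matD(2) cols_length insertCI nth_mem)
    qed (use zero j in simp)
  qed
  have tri_B: "triangular_pattern B piv key" using tri by (simp add: B_def)
  show ?thesis
    by (rule rank_eq_if_cols_between[OF A B triangular_pattern_distinct_cols[OF tri_B]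
          lin_indpt_cols_triangular_pattern[OF B tri_B] sub sup])
qed

(* The nonzero columns of corner_part M k f are the first and the last k ones, numbered by
   corner_col M k; column corner_col M k b has distance exactly M - k from row corner_pivot M k b,
   and ordering the columns by corner_key k makes these pivots triangular. *)

definition corner_col :: "nat \<Rightarrow> nat \<Rightarrow> nat \<Rightarrow> nat" where
  "corner_col M k b = (if b < k then b else M - 2 * k + b)"

definition corner_pivot :: "nat \<Rightarrow> nat \<Rightarrow> nat \<Rightarrow> nat" where
  "corner_pivot M k b = (if b < k then M - k + b else b - k)"

definition corner_key :: "nat \<Rightarrow> nat \<Rightarrow> nat" where
  "corner_key k b = (if b < k then b else 3 * k - b)"

lemma absdiff_corner_pivot:
  "2 * k \<le> M \<Longrightarrow> b < 2 * k \<Longrightarrow> absdiff (corner_pivot M k b) (corner_col M k b) = M - k"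
  by (auto simp: corner_pivot_def corner_col_def absdiff_def)

lemma corner_pivot_far:
  assumes k: "2 * k \<le> M" and b: "b < 2 * k" "b' < 2 * k"
    and far: "M - k \<le> absdiff (corner_pivot M k b) (corner_col M k b')"
  shows "b' = b \<or> corner_key k b' < corner_key k b"
proof (cases "b < k"; cases "b' < k")
  assume "b < k" "b' < k"
  hence "absdiff (corner_pivot M k b) (corner_col M k b') = M - k + b - b'"
    using k by (simp add: corner_pivot_def corner_col_def absdiff_def)
  thus ?thesis using far k \<open>b < k\<close> \<open>b' < k\<close> by (simp add: corner_key_def; linarith)
next
  assume "b < k" "\<not> b' < k"
  hence "absdiff (corner_pivot M k b) (corner_col M k b') < k"
    using k b by (auto simp: corner_pivot_def corner_col_def absdiff_def)
  thus ?thesis using far k by simp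
next
  assume "\<not> b < k" "b' < k"
  hence "absdiff (corner_pivot M k b) (corner_col M k b') < k"
    using k b by (auto simp: corner_pivot_def corner_col_def absdiff_def)
  thus ?thesis using far k by simp
next
  assume "\<not> b < k" "\<not> b' < k"
  hence "absdiff (corner_pivot M k b) (corner_col M k b') = M - k + b' - b"
    using k b by (simp add: corner_pivot_def corner_col_def absdiff_def)
  thus ?thesis using far k \<open>\<not> b < k\<close> \<open>\<not> b' < k\<close> b by (simp add: corner_key_def; linarith)
qed

lemma rank_corner_part:
  fixes f :: "nat \<Rightarrow> real"
  assumes k: "1 \<le> k" "2 * k \<le> M" and f: "f (M - k) \<noteq> 0"
  shows "vec_space.rank M (corner_part M k f) = 2 * k"
proof -
  let ?B = "mat M (2 * k) (\<lambda>(i, b). corner_part M k f $$ (i, corner_col M k b))"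
  have col: "corner_col M k b < M" if "b < 2 * k" for b
    using that k by (auto simp: corner_col_def)
  have piv: "corner_pivot M k b < M" if "b < 2 * k" for b
    using that k by (auto simp: corner_pivot_def)
  have B_entry: "?B $$ (i, b) \<noteq> 0 \<longleftrightarrow>
      M - k \<le> absdiff i (corner_col M k b) \<and> f (absdiff i (corner_col M k b)) \<noteq> 0"
    if "i < M" "b < 2 * k" for i b
    using that col[OF that(2)] by (simp add: corner_part_def)
  have tri: "triangular_pattern ?B (corner_pivot M k) (corner_key k)"
    unfolding triangular_pattern_def
  proof (intro allI impI conjI)
    fix b b' assume "b < dim_col ?B"
    hence b: "b < 2 * k" by simp
    show "corner_pivot M k b < dim_row ?B" using piv[OF b] by simp
    show "?B $$ (corner_pivot M k b, b) \<noteq> 0"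
      using B_entry[OF piv[OF b] b] absdiff_corner_pivot[OF k(2) b] f by simp
    assume "b' < dim_col ?B" "b' \<noteq> b \<and> ?B $$ (corner_pivot M k b, b') \<noteq> 0"
    thus "corner_key k b' < corner_key k b"
      using B_entry[OF piv[OF b]] corner_pivot_far[OF k(2) b] by auto
  qed
  have zero: "col (corner_part M k f) j = 0\<^sub>v M"
    if "j < M" "j \<notin> corner_col M k ` {..<2 * k}" for j
  proof -
    have "k \<le> j \<and> j < M - k"
    proof (rule ccontr)
      assume "\<not> (k \<le> j \<and> j < M - k)"
      hence "corner_col M k (if j < k then j else j - (M - 2 * k)) = j"
        "(if j < k then j else j - (M - 2 * k)) < 2 * k"
        using that(1) k by (auto simp: corner_col_def)
      thus False using that(2) by (metis lessThan_iff rev_image_eqI)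
    qed
    thus ?thesis using that(1) by (intro eq_vecI) (auto simp: corner_part_def absdiff_def)
  qed
  show ?thesis
    by (rule vec_space.rank_eq_if_other_cols_zero[OF _ col tri zero]) (simp add: corner_part_def)
qed

section \<open>Row-sum bounds\<close>

lemma norm_inf_le:
  fixes A :: "real mat"
  assumes "A \<in> carrier_mat m n" "0 < m" "\<And>i. i < m \<Longrightarrow> (\<Sum>j<n. \<bar>A $$ (i, j)\<bar>) \<le> B"
  shows "norm_inf A \<le> B"
  unfolding norm_inf_def using assms by (subst Max_le_iff) auto

lemma norm_inf_sym_toeplitz_le:
  fixes f w :: "nat \<Rightarrow> real"
  assumes n: "0 < n" and S: "finite S" "\<And>m. m \<in> S \<Longrightarrow> 0 \<le> w m"
    and f: "\<And>t. t < n \<Longrightarrow> f t \<noteq> 0 \<Longrightarrow> n \<le> 2 * t \<and> n - t \<in> S \<and> \<bar>f t\<bar> \<le> w (n - t)"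
  shows "norm_inf (sym_toeplitz n f) \<le> (\<Sum>m\<in>S. w m)"
proof (rule norm_inf_le[OF sym_toeplitz_carrier n])
  fix i assume i: "i < n"
  define J where "J = {j. j < n \<and> f (absdiff i j) \<noteq> 0}"
  define g where "g j = n - absdiff i j" for j
  have J_far: "J \<subseteq> {j. j < n \<and> n \<le> 2 * absdiff i j}"
    using f i absdiff_less by (auto simp: J_def)
  have "inj_on g J"
  proof (rule inj_onI)
    fix j1 j2 assume j: "j1 \<in> J" "j2 \<in> J" "g j1 = g j2"
    have "absdiff i j1 < n" "absdiff i j2 < n"
      using j(1,2) i absdiff_less by (auto simp: J_def)
    hence "absdiff i j1 = absdiff i j2" using j(3) unfolding g_def by linarith
    thus "j1 = j2" using j J_far inj_on_absdiff_far[of i n] by (auto dest: inj_onD)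
  qed
  have "(\<Sum>j<n. \<bar>sym_toeplitz n f $$ (i, j)\<bar>) = (\<Sum>j\<in>J. \<bar>f (absdiff i j)\<bar>)"
    using i by (intro sum.mono_neutral_cong_right) (auto simp: J_def)
  also have "\<dots> \<le> (\<Sum>j\<in>J. w (g j))"
    using f i absdiff_less by (intro sum_mono) (auto simp: J_def g_def)
  also have "\<dots> = (\<Sum>m\<in>g ` J. w m)"
    by (simp add: sum.reindex[OF \<open>inj_on g J\<close>])
  also have "\<dots> \<le> (\<Sum>m\<in>S. w m)"
    using f S i absdiff_less by (intro sum_mono2) (auto simp: J_def g_def)
  finally show "(\<Sum>j<n. \<bar>sym_toeplitz n f $$ (i, j)\<bar>) \<le> (\<Sum>m\<in>S. w m)" .
qed

lemma norm_inf_corner_part_le: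
  fixes \<alpha> \<mu> :: real
  assumes \<alpha>: "0 < \<alpha>" "\<alpha> < 2" and \<mu>: "0 \<le> \<mu>" and k: "1 \<le> k" "2 * k \<le> M"
  shows "norm_inf (corner_part M k (\<lambda>t. \<mu> * circ_defect \<alpha> M t))
           \<le> \<mu> * (cfrac \<alpha> 0 / 2 - coef_tail \<alpha> (Suc k))"
proof -
  have "norm_inf (corner_part M k (\<lambda>t. \<mu> * circ_defect \<alpha> M t))
      \<le> (\<Sum>m = 1..<Suc k. \<mu> * - cfrac \<alpha> (int m))"
    unfolding corner_part_def
  proof (rule norm_inf_sym_toeplitz_le)
    show "0 < M" "finite {1..<Suc k}" using k by simp_all
    show "0 \<le> \<mu> * - cfrac \<alpha> (int m)" if "m \<in> {1..<Suc k}" for m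
      using cfrac_nat_neg[OF \<alpha>, of m] that \<mu> by (simp add: mult_nonneg_nonpos)
    fix t assume t: "t < M" and "(if M - k \<le> t then \<mu> * circ_defect \<alpha> M t else 0) \<noteq> 0"
    hence far: "M - k \<le> t" by (simp split: if_splits)
    hence "M \<le> 2 * t" using k by linarith
    hence "\<bar>\<mu> * circ_defect \<alpha> M t\<bar> \<le> \<mu> * - cfrac \<alpha> (int (M - t))"
      using mult_left_mono[OF abs_circ_defect_le[OF \<alpha> _ t] \<mu>] \<mu> by (simp add: abs_mult)
    thus "M \<le> 2 * t \<and> M - t \<in> {1..<Suc k}
        \<and> \<bar>if M - k \<le> t then \<mu> * circ_defect \<alpha> M t else 0\<bar> \<le> \<mu> * - cfrac \<alpha> (int (M - t))"
      using \<open>M \<le> 2 * t\<close> far t by auto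
  qed
  also have "\<dots> = - \<mu> * (\<Sum>m = 1..<Suc k. cfrac \<alpha> (int m))"
    unfolding sum_distrib_left by (rule sum.cong) simp_all
  also have "\<dots> = \<mu> * (cfrac \<alpha> 0 / 2 - coef_tail \<alpha> (Suc k))"
    using k by (subst sum_cfrac_nat[OF \<alpha>]) (auto simp: cfrac_zero_half[OF \<alpha>] algebra_simps)
  finally show ?thesis .
qed

lemma norm_inf_band_part_le:
  fixes \<alpha> \<mu> :: real
  assumes \<alpha>: "0 < \<alpha>" "\<alpha> < 2" and \<mu>: "0 \<le> \<mu>" and k: "1 \<le> k" "2 * k \<le> M"
  shows "norm_inf (band_part M k (\<lambda>t. \<mu> * circ_defect \<alpha> M t))
           \<le> \<mu> * (coef_tail \<alpha> (Suc k) - coef_tail \<alpha> (Suc (M div 2)))"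
proof -
  have "norm_inf (band_part M k (\<lambda>t. \<mu> * circ_defect \<alpha> M t))
      \<le> (\<Sum>m = Suc k..<Suc (M div 2). \<mu> * - cfrac \<alpha> (int m))"
    unfolding band_part_def
  proof (rule norm_inf_sym_toeplitz_le)
    show "0 < M" "finite {Suc k..<Suc (M div 2)}" using k by simp_all
    show "0 \<le> \<mu> * - cfrac \<alpha> (int m)" if "m \<in> {Suc k..<Suc (M div 2)}" for m
      using cfrac_nat_neg[OF \<alpha>, of m] that \<mu> by (simp add: mult_nonneg_nonpos)
    fix t assume t: "t < M" and nz: "(if M - k \<le> t then 0 else \<mu> * circ_defect \<alpha> M t) \<noteq> 0"
    hence near: "t < M - k" by (simp split: if_splits)
    have "circ_defect \<alpha> M t \<noteq> 0" using nz by (simp split: if_splits)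
    hence "M \<le> 2 * t" using circ_defect_eq_0[of t M \<alpha>] by linarith
    hence "\<bar>\<mu> * circ_defect \<alpha> M t\<bar> \<le> \<mu> * - cfrac \<alpha> (int (M - t))"
      using mult_left_mono[OF abs_circ_defect_le[OF \<alpha> _ t] \<mu>] \<mu> by (simp add: abs_mult)
    thus "M \<le> 2 * t \<and> M - t \<in> {Suc k..<Suc (M div 2)}
        \<and> \<bar>if M - k \<le> t then 0 else \<mu> * circ_defect \<alpha> M t\<bar> \<le> \<mu> * - cfrac \<alpha> (int (M - t))"
      using \<open>M \<le> 2 * t\<close> near t by auto
  qed
  also have "\<dots> = - \<mu> * (\<Sum>m = Suc k..<Suc (M div 2). cfrac \<alpha> (int m))"
    unfolding sum_distrib_left by (rule sum.cong) simp_all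
  also have "\<dots> = \<mu> * (coef_tail \<alpha> (Suc k) - coef_tail \<alpha> (Suc (M div 2)))"
    using k by (subst sum_cfrac_nat[OF \<alpha>]) (auto simp: algebra_simps)
  finally show ?thesis .
qed

lemma norm_inf_corner_part_less:
  fixes \<alpha> \<mu> :: real
  assumes \<alpha>: "1 < \<alpha>" "\<alpha> < 2" and \<mu>: "0 < \<mu>" and k: "1 \<le> k" "2 * k \<le> M" and M: "3 \<le> M"
  shows "norm_inf (corner_part M k (\<lambda>t. \<mu> * circ_defect \<alpha> M t))
           < \<mu> * (cfrac \<alpha> 0 / 2 - theta \<alpha> / (real M - 1 / 2) powr \<alpha>)"
proof -
  have "theta \<alpha> / (real M - 1 / 2) powr \<alpha> \<le> kappa \<alpha> / (real M - 1 / 2) powr \<alpha>"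
    using theta_le_kappa[of \<alpha>] \<alpha> by (intro divide_right_mono) auto
  also have "\<dots> < coef_tail \<alpha> (Suc k)"
    using \<alpha> k M by (intro coef_tail_Suc_gt) auto
  finally have "\<mu> * (cfrac \<alpha> 0 / 2 - coef_tail \<alpha> (Suc k))
      < \<mu> * (cfrac \<alpha> 0 / 2 - theta \<alpha> / (real M - 1 / 2) powr \<alpha>)"
    using \<mu> by simp
  thus ?thesis using norm_inf_corner_part_le[of \<alpha> \<mu> k M] \<alpha> \<mu> k by linarith
qed

lemma norm_inf_band_part_less:
  fixes \<alpha> \<mu> :: real
  assumes \<alpha>: "1 < \<alpha>" "\<alpha> < 2" and \<mu>: "0 < \<mu>" and k: "1 \<le> k" "2 * k \<le> M"
  shows "norm_inf (band_part M k (\<lambda>t. \<mu> * circ_defect \<alpha> M t)) < \<mu> * theta0 \<alpha> / real k powr \<alpha>"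
proof -
  have "norm_inf (band_part M k (\<lambda>t. \<mu> * circ_defect \<alpha> M t))
      \<le> \<mu> * (coef_tail \<alpha> (Suc k) - coef_tail \<alpha> (Suc (M div 2)))"
    using \<alpha> \<mu> k by (intro norm_inf_band_part_le) auto
  also have "\<dots> < \<mu> * coef_tail \<alpha> (Suc k)"
    using coef_tail_pos[of \<alpha> "Suc (M div 2)"] \<alpha> \<mu> by simp
  also have "\<dots> \<le> \<mu> * (kappa \<alpha> / real k powr \<alpha>)"
    using coef_tail_Suc_le[of \<alpha> k] \<alpha> \<mu> k by (intro mult_left_mono) auto
  also have "\<dots> \<le> \<mu> * (theta0 \<alpha> / real k powr \<alpha>)"
    using kappa_le_theta0[of \<alpha>] \<alpha> \<mu> by (intro mult_left_mono divide_right_mono) auto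
  finally show ?thesis by simp
qed

lemma k0_bounds:
  fixes \<alpha> Y \<epsilon> :: real and M :: nat
  assumes \<alpha>: "0 < \<alpha>" and Y: "0 < Y" and M: "even M" "2 < M"
    and \<epsilon>: "2 powr \<alpha> * Y / (real M - 2) powr \<alpha> < \<epsilon>"
    and k: "k = nat (\<lceil>(Y / \<epsilon>) powr (1 / \<alpha>)\<rceil> + 1)"
  shows "1 \<le> k" "2 * k \<le> M" "Y / real k powr \<alpha> < \<epsilon>"
proof -
  define q where "q = (Y / \<epsilon>) powr (1 / \<alpha>)"
  have M2: "0 < real M - 2" using M by simp
  have \<epsilon>0: "0 < \<epsilon>" using \<epsilon> Y M2 by (smt (verit) divide_pos_pos mult_pos_pos powr_gt_zero)
  have q: "0 < q" "q powr \<alpha> = Y / \<epsilon>" using Y \<epsilon>0 \<alpha> by (simp_all add: q_def powr_powr)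
  have "Y / \<epsilon> < ((real M - 2) / 2) powr \<alpha>"
    using \<epsilon> \<epsilon>0 M2 by (simp add: powr_divide field_simps)
  hence "q < ((((real M - 2) / 2) powr \<alpha>) powr (1 / \<alpha>))"
    unfolding q_def using Y \<epsilon>0 \<alpha> by (intro powr_less_mono2) auto
  also have "\<dots> = real (M div 2) - 1" using M2 \<alpha> M(1) by (simp add: powr_powr real_of_nat_div)
  finally have "\<lceil>q\<rceil> \<le> int (M div 2) - 1" by (intro ceiling_le) simp
  moreover have "k = nat (\<lceil>q\<rceil> + 1)" by (simp add: k q_def)
  moreover have "q < real k" using q(1) k by (simp add: q_def) linarith
  ultimately show "1 \<le> k" "2 * k \<le> M" using q(1) M(1) by (auto elim: evenE)
  have "Y / \<epsilon> < real k powr \<alpha>"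
    unfolding q(2)[symmetric] using q(1) \<open>q < real k\<close> \<alpha> by (intro powr_less_mono2) auto
  thus "Y / real k powr \<alpha> < \<epsilon>" using \<epsilon>0 \<open>q < real k\<close> q(1) by (simp add: field_simps)
qed

theorem mainTheorem7:
  fixes \<alpha> \<gamma> \<tau> a b \<epsilon> :: real and M :: nat
  assumes "1 < \<alpha>" and "\<alpha> < 2" and "0 < \<gamma>" and "0 < \<tau>" and "a < b"
    and "8 \<le> M" and "even M"
    and "2 powr \<alpha> * mu \<alpha> \<gamma> \<tau> a b M * theta0 \<alpha> / (real M - 2) powr \<alpha> < \<epsilon>"
    and "\<epsilon> \<le> mu \<alpha> \<gamma> \<tau> a b M * theta0 \<alpha>"
  shows "\<exists>E F :: real mat.
           E \<in> carrier_mat M M \<and> F \<in> carrier_mat M M \<and>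
           transpose_mat E = E \<and> transpose_mat F = F \<and>
           Tmat \<alpha> \<gamma> \<tau> a b M - Cmat \<alpha> \<gamma> \<tau> a b M = E + F \<and>
           int (vec_space.rank M E) =
             2 * (\<lceil>(mu \<alpha> \<gamma> \<tau> a b M * theta0 \<alpha> / \<epsilon>) powr (1 / \<alpha>)\<rceil> + 1) \<and>
           norm_inf E < mu \<alpha> \<gamma> \<tau> a b M *
             (cfrac \<alpha> 0 / 2 - theta \<alpha> / (real M - 1 / 2) powr \<alpha>) \<and>
           norm_inf F < \<epsilon>"
proof -
  define \<mu> where "\<mu> = mu \<alpha> \<gamma> \<tau> a b M"
  define k where "k = nat (\<lceil>(\<mu> * theta0 \<alpha> / \<epsilon>) powr (1 / \<alpha>)\<rceil> + 1)"
  define d where "d t = \<mu> * circ_defect \<alpha> M t" for t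
  define E F where "E = corner_part M k d" and "F = band_part M k d"
  have \<alpha>: "0 < \<alpha>" "\<alpha> < 2" using assms(1,2) by simp_all
  have \<mu>: "0 < \<mu>" using assms(3-5) by (simp add: \<mu>_def mu_def hstep_def)
  have "0 < theta0 \<alpha>" using kappa_pos[OF \<alpha>] kappa_le_theta0[OF \<alpha>] by linarith
  moreover have "2 powr \<alpha> * (\<mu> * theta0 \<alpha>) / (real M - 2) powr \<alpha> < \<epsilon>"
    using assms(8) by (simp add: \<mu>_def mult.assoc)
  ultimately have k: "1 \<le> k" "2 * k \<le> M" "\<mu> * theta0 \<alpha> / real k powr \<alpha> < \<epsilon>"
    using k0_bounds[OF \<alpha>(1) _ assms(7) _ _ k_def] \<mu> assms(6) by simp_all
  have "Tmat \<alpha> \<gamma> \<tau> a b M - Cmat \<alpha> \<gamma> \<tau> a b M = E + F"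
    unfolding E_def F_def corner_part_plus_band_part Tmat_minus_Cmat d_def \<mu>_def ..
  moreover have "E \<in> carrier_mat M M" "F \<in> carrier_mat M M"
    "transpose_mat E = E" "transpose_mat F = F"
    by (simp_all add: E_def F_def corner_part_def band_part_def transpose_sym_toeplitz)
  moreover have "int (vec_space.rank M E) = 2 * (\<lceil>(\<mu> * theta0 \<alpha> / \<epsilon>) powr (1 / \<alpha>)\<rceil> + 1)"
  proof -
    have "d (M - k) \<noteq> 0" using circ_defect_ne_0[OF \<alpha> k(1,2)] \<mu> by (simp add: d_def)
    hence "vec_space.rank M E = 2 * k" unfolding E_def by (rule rank_corner_part[OF k(1,2)])
    thus ?thesis using k(1) by (simp add: k_def)
  qed
  moreover have "norm_inf E < \<mu> * (cfrac \<alpha> 0 / 2 - theta \<alpha> / (real M - 1 / 2) powr \<alpha>)"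
    unfolding E_def d_def using assms(1,2,6) \<mu> k(1,2) by (intro norm_inf_corner_part_less) auto
  moreover have "norm_inf F < \<epsilon>"
    using norm_inf_band_part_less[OF assms(1,2) \<mu> k(1,2)] k(3) unfolding F_def d_def by simp
  ultimately show ?thesis unfolding \<mu>_def by blast
qed

end
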